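(* Let $\Omega\subseteq\mathbb{R}^n$ be open, $\nu,C_1,\dots,C_{n-1}\in\mathcal{C}^\infty(\Omega,\mathbb{R})$, $H:=C_{n-1}$, and $X$ the vector field on $\Omega$ with components $X_i=\nu\cdot\frac{\partial(C_1,\dots,C_{n-2},x_i,H)}{\partial(x_1,\dots,x_n)}$. Let $\overline{x}_e\in\mathcal{E}^{C_{n-1}}_{C_1,\dots,C_{n-2}}$ be a non-degenerate regular equilibrium point of $X$, let $\Omega'\subseteq\Omega$ be any open neighborhood of $\overline{x}_e$ and $\Phi:\Omega'\to W':=\Phi(\Omega')$ a smooth diffeomorphism. Then $$\mathcal{I}_{\Phi_\star X}(\Phi(\overline{x}_e))=\mathcal{I}_X(\overline{x}_e),$$ where $\mathcal{I}_{\Phi_\star X}(\Phi(\overline{x}_e))$ is computed from the Hamiltonian form of $\Phi_\star X$ with data $(\nu_\Phi;\Phi_\star C_1,\dots,\Phi_\star C_{n-2};\Phi_\star H)$ (in which $\Phi(\overline{x}_e)$ is again a non-degenerate regular equilibrium).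
   Context: $\langle\cdot,\cdot\rangle$ is the standard inner product, $\nabla$ the gradient, $\operatorname{Hess}F=\mathrm{D}(\nabla F)$, $\frac{\partial(\cdots)}{\partial(x_1,\dots,x_n)}$ a Jacobian determinant. For decomposable $k$-vectors, $\langle u_1\wedge\dots\wedge u_k,v_1\wedge\dots\wedge v_k\rangle_k:=\det[\langle u_i,v_j\rangle]$. $\mathcal{E}^{C_{n-1}}_{C_1,\dots,C_{n-2}}:=\{\overline{x}\in\Omega:\nu(\overline{x})\neq0,\ \nabla C_1\wedge\dots\wedge\nabla C_{n-2}(\overline{x})\neq0,\ \nabla C_1\wedge\dots\wedge\nabla C_{n-1}(\overline{x})=0\}$. For $\overline{x}_e$ in it, $\overrightarrow{\lambda_e}\in\mathbb{R}^{n-2}$ is the unique vector with $\nabla H(\overline{x}_e)+\sum_i\lambda^e_i\nabla C_i(\overline{x}_e)=0$, $F_{\overrightarrow{\lambda_e}}:=H+\sum_i\lambda^e_iC_i$; non-degeneracy means $A:=\operatorname{Hess}F_{\overrightarrow{\lambda_e}}(\overline{x}_e)$ invertible, and $\mathcal{I}_X(\overline{x}_e):=\nu^2(\overline{x}_e)\det(A)\langle A^{-1}\nabla C_1(\overline{x}_e)\wedge\dots\wedge A^{-1}\nabla C_{n-2}(\overline{x}_e),\nabla C_1(\overline{x}_e)\wedge\dots\wedge\nabla C_{n-2}(\overline{x}_e)\rangle_{n-2}$. For functions, $\Phi_\star f:=f\circ\Phi^{-1}$; $\Phi_\star X$ is the push-forward; $\nu_\Phi:=\Phi_\star\nu\cdot\Phi_\star\det(\mathrm{D}\Phi)$;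 $\Phi_\star X$ has components $\nu_\Phi\cdot\frac{\partial(\Phi_\star C_1,\dots,\Phi_\star C_{n-2},y_i,\Phi_\star H)}{\partial(y_1,\dots,y_n)}$, and $\mathcal{I}_{\Phi_\star X}(\Phi(\overline{x}_e))$ is defined by the same formula as $\mathcal{I}_X$ with $\nu,C_i,H,\overline{x}_e,\overrightarrow{\lambda_e}$ replaced by $\nu_\Phi,\Phi_\star C_i,\Phi_\star H,\Phi(\overline{x}_e),\overrightarrow{\lambda_e}$. *)

theory Defs
  imports "HOL-Analysis.Analysis"
begin

text \<open>Smoothness (C-infinity) on a set: all iterated directional (Frechet) derivatives exist.
  D vs x is the iterated derivative of f at x in the directions listed in vs.\<close>
definition smooth_on :: "'a::real_normed_vector set \<Rightarrow> ('a \<Rightarrow> 'b::real_normed_vector) \<Rightarrow> bool" where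
  "smooth_on S f \<longleftrightarrow>
     (\<exists>D :: 'a list \<Rightarrow> 'a \<Rightarrow> 'b.
        (\<forall>x\<in>S. D [] x = f x) \<and>
        (\<forall>vs. \<forall>x\<in>S. (D vs has_derivative (\<lambda>v. D (v # vs) x)) (at x)))"

definition diffeo_on :: "'a::real_normed_vector set \<Rightarrow> ('a \<Rightarrow> 'a) \<Rightarrow> bool" where
  "diffeo_on U \<Phi> \<longleftrightarrow> open U \<and> open (\<Phi> ` U) \<and> inj_on \<Phi> U \<and> smooth_on U \<Phi>
      \<and> smooth_on (\<Phi> ` U) (inv_into U \<Phi>)"

definition grad :: "(real^'n \<Rightarrow> real) \<Rightarrow> real^'n \<Rightarrow> real^'n" where
  "grad f x = (\<chi> i. frechet_derivative f (at x) (axis i 1))"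

definition Hess :: "(real^'n \<Rightarrow> real) \<Rightarrow> real^'n \<Rightarrow> real^'n^'n" where
  "Hess f x = matrix (frechet_derivative (grad f) (at x))"

definition detn :: "nat \<Rightarrow> (nat \<Rightarrow> nat \<Rightarrow> real) \<Rightarrow> real" where
  "detn k M = (\<Sum>p | p permutes {..<k}. of_int (sign p) * (\<Prod>i<k. M i (p i)))"

text \<open>wedge_ip k u v = < u_1 ^ ... ^ u_k , v_1 ^ ... ^ v_k >_k = det [<u_i, v_j>] (1-based indices).\<close>
definition wedge_ip :: "nat \<Rightarrow> (nat \<Rightarrow> real^'n) \<Rightarrow> (nat \<Rightarrow> real^'n) \<Rightarrow> real" where
  "wedge_ip k u v = detn k (\<lambda>i j. u (Suc i) \<bullet> v (Suc j))"

text \<open>A decomposable k-vector u_1 ^ ... ^ u_k is zero iff its squared norm <w,w>_k vanishes.\<close>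
definition wedge_zero :: "nat \<Rightarrow> (nat \<Rightarrow> real^'n) \<Rightarrow> bool" where
  "wedge_zero k u \<longleftrightarrow> wedge_ip k u u = 0"

text \<open>The set E^{C_{n-1}}_{C_1,...,C_{n-2}} in Omega, with n = CARD('n) and C_1..C_{n-1} given by C.\<close>
definition E_set :: "(real^'n) set \<Rightarrow> (real^'n \<Rightarrow> real) \<Rightarrow> (nat \<Rightarrow> real^'n \<Rightarrow> real) \<Rightarrow> (real^'n) set" where
  "E_set \<Omega> \<nu> C = {x \<in> \<Omega>. \<nu> x \<noteq> 0
       \<and> \<not> wedge_zero (CARD('n) - 2) (\<lambda>i. grad (C i) x)
       \<and> wedge_zero (CARD('n) - 1) (\<lambda>i. grad (C i) x)}"

definition F_lam :: "(nat \<Rightarrow> real^'n \<Rightarrow> real) \<Rightarrow> (nat \<Rightarrow> real) \<Rightarrow> real^'n \<Rightarrow> real" where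
  "F_lam C lam = (\<lambda>y. C (CARD('n) - 1) y + (\<Sum>i=1..CARD('n) - 2. lam i * C i y))"

definition lagrange_cond :: "(nat \<Rightarrow> real^'n \<Rightarrow> real) \<Rightarrow> (nat \<Rightarrow> real) \<Rightarrow> real^'n \<Rightarrow> bool" where
  "lagrange_cond C lam x \<longleftrightarrow>
     grad (C (CARD('n) - 1)) x + (\<Sum>i=1..CARD('n) - 2. lam i *\<^sub>R grad (C i) x) = 0"

definition nondegenerate :: "(nat \<Rightarrow> real^'n \<Rightarrow> real) \<Rightarrow> (nat \<Rightarrow> real) \<Rightarrow> real^'n \<Rightarrow> bool" where
  "nondegenerate C lam x \<longleftrightarrow> invertible (Hess (F_lam C lam) x)"

definition index_I :: "(real^'n \<Rightarrow> real) \<Rightarrow> (nat \<Rightarrow> real^'n \<Rightarrow> real) \<Rightarrow> (nat \<Rightarrow> real) \<Rightarrow> real^'n \<Rightarrow> real" where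
  "index_I \<nu> C lam x =
     (let A = Hess (F_lam C lam) x in
       (\<nu> x)^2 * det A *
       wedge_ip (CARD('n) - 2) (\<lambda>i. matrix_inv A *v grad (C i) x) (\<lambda>i. grad (C i) x))"

definition push_fun :: "(real^'n) set \<Rightarrow> (real^'n \<Rightarrow> real^'n) \<Rightarrow> (real^'n \<Rightarrow> real) \<Rightarrow> real^'n \<Rightarrow> real" where
  "push_fun U \<Phi> f = f \<circ> inv_into U \<Phi>"

definition push_nu :: "(real^'n) set \<Rightarrow> (real^'n \<Rightarrow> real^'n) \<Rightarrow> (real^'n \<Rightarrow> real) \<Rightarrow> real^'n \<Rightarrow> real" where
  "push_nu U \<Phi> \<nu> = (\<lambda>y. \<nu> (inv_into U \<Phi> y) *
       det (matrix (frechet_derivative \<Phi> (at (inv_into U \<Phi> y)))))"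

end

theory Submission
  imports Defs "Jordan_Normal_Form.Determinant"
begin

text \<open>Write \<open>\<Psi>\<close> for the inverse of \<open>\<Phi>\<close>, \<open>J = D\<Phi>(x\<^sub>e)\<close> and \<open>P = D\<Psi>(\<Phi> x\<^sub>e)\<close>, so that
  \<open>P J = 1\<close>. By the chain rule every gradient transforms as \<open>\<nabla>(f \<circ> \<Psi>) = P\<^sup>T \<nabla>f\<close>, and because
  \<open>\<nabla>F\<^sub>\<lambda>\<close> vanishes at \<open>x\<^sub>e\<close> the Hessian transforms by congruence, \<open>A \<mapsto> P\<^sup>T A P\<close>. Hence
  \<open>\<Phi> x\<^sub>e\<close> is again a non-degenerate regular equilibrium with the same multipliers. In the index,
  \<open>\<nu>\<^sub>\<Phi>\<^sup>2 det (P\<^sup>T A P) = \<nu>\<^sup>2 (det J det P)\<^sup>2 det A = \<nu>\<^sup>2 det A\<close>, and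
  \<open>(P\<^sup>T A P)\<^sup>-\<^sup>1 = J A\<^sup>-\<^sup>1 J\<^sup>T\<close> leaves every Gram entry
  \<open>\<langle>J A\<^sup>-\<^sup>1 J\<^sup>T P\<^sup>T \<nabla>C\<^sub>i, P\<^sup>T \<nabla>C\<^sub>j\<rangle> = \<langle>A\<^sup>-\<^sup>1 \<nabla>C\<^sub>i, \<nabla>C\<^sub>j\<rangle>\<close> unchanged.\<close>

lemma detn_eq_0_iff:
  "detn m M = 0 \<longleftrightarrow> (\<exists>c. (\<exists>j<m. c j \<noteq> 0) \<and> (\<forall>i<m. (\<Sum>j<m. M i j * c j) = 0))"
proof -
  define A :: "real Matrix.mat" where "A = Matrix.mat m m (\<lambda>(i,j). M i j)"
  have det_A: "detn m M = Determinant.det A"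
    unfolding detn_def Determinant.det_def A_def by (simp add: atLeast0LessThan)
  have A_carrier: "A \<in> carrier_mat m m" by (simp add: A_def)
  have kernel: "A *\<^sub>v v = 0\<^sub>v m \<longleftrightarrow> (\<forall>i<m. (\<Sum>j<m. M i j * v $ j) = 0)"
    if "v \<in> carrier_vec m" for v
    using that by (auto simp: A_def mult_mat_vec_def scalar_prod_def atLeast0LessThan vec_eq_iff)
  show ?thesis
  proof
    assume "detn m M = 0"
    then obtain v where v: "v \<in> carrier_vec m" "v \<noteq> 0\<^sub>v m" "A *\<^sub>v v = 0\<^sub>v m"
      using det_0_iff_vec_prod_zero[OF A_carrier] det_A by auto
    then have "\<exists>j<m. v $ j \<noteq> 0" by (auto simp: vec_eq_iff)
    with kernel[OF v(1)] v(3) show "\<exists>c. (\<exists>j<m. c j \<noteq> 0) \<and> (\<forall>i<m. (\<Sum>j<m. M i j * c j) = 0)"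
      by blast
  next
    assume "\<exists>c. (\<exists>j<m. c j \<noteq> 0) \<and> (\<forall>i<m. (\<Sum>j<m. M i j * c j) = 0)"
    then obtain c where c: "\<exists>j<m. c j \<noteq> 0" "\<forall>i<m. (\<Sum>j<m. M i j * c j) = 0" by blast
    define v where "v = Matrix.vec m c"
    have v: "v \<in> carrier_vec m" "v \<noteq> 0\<^sub>v m" using c(1) by (auto simp: v_def vec_eq_iff)
    moreover have "A *\<^sub>v v = 0\<^sub>v m" using kernel[OF v(1)] c(2) by (simp add: v_def)
    ultimately show "detn m M = 0" using det_0_iff_vec_prod_zero[OF A_carrier] det_A by auto
  qed
qed

(* Jordan_Normal_Form is needed only for the lemma above; restore the notation of HOL-Analysis. *)
no_notation Matrix.vec_index (infixl "$" 100)
hide_const (open) Determinant.det Matrix.mat Matrix.vec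
hide_type (open) Matrix.vec

lemma detn_cong:
  assumes "\<And>i j. i < m \<Longrightarrow> j < m \<Longrightarrow> M i j = M' i j"
  shows "detn m M = detn m M'"
proof -
  have "(\<Prod>i<m. M i (p i)) = (\<Prod>i<m. M' i (p i))" if "p permutes {..<m}" for p
    using assms permutes_in_image[OF that] by (intro prod.cong) auto
  then show ?thesis unfolding detn_def by (intro sum.cong) simp_all
qed

lemma wedge_zero_iff_dependent:
  fixes u :: "nat \<Rightarrow> real^'n"
  shows "wedge_zero m u \<longleftrightarrow> (\<exists>c. (\<exists>j<m. c j \<noteq> 0) \<and> (\<Sum>j<m. c j *\<^sub>R u (Suc j)) = 0)"
proof -
  have gram_row: "(\<Sum>j<m. (u (Suc i) \<bullet> u (Suc j)) * c j) = u (Suc i) \<bullet> (\<Sum>j<m. c j *\<^sub>R u (Suc j))"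
    for c i by (simp add: inner_sum_right mult.commute)
  have "(\<forall>i<m. u (Suc i) \<bullet> w = 0) \<longleftrightarrow> w = 0" if "w = (\<Sum>j<m. c j *\<^sub>R u (Suc j))" for c w
  proof
    assume orth: "\<forall>i<m. u (Suc i) \<bullet> w = 0"
    have "w \<bullet> w = (\<Sum>i<m. c i * (u (Suc i) \<bullet> w))" by (simp add: that inner_sum_left)
    also have "\<dots> = 0" using orth by simp
    finally show "w = 0" by simp
  qed simp
  then show ?thesis
    unfolding wedge_zero_def wedge_ip_def detn_eq_0_iff gram_row by blast
qed

lemma wedge_zero_matrix_vector_mult:
  fixes Q :: "real^'n^'n"
  assumes "invertible Q" and "\<And>j. j < m \<Longrightarrow> v (Suc j) = Q *v u (Suc j)"
  shows "wedge_zero m v \<longleftrightarrow> wedge_zero m u"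
proof -
  have combination: "(\<Sum>j<m. c j *\<^sub>R v (Suc j)) = Q *v (\<Sum>j<m. c j *\<^sub>R u (Suc j))" for c
    using assms(2) by (simp add: matrix_vector_mul_linear linear_sum linear_scale)
  have "Q *v x = 0 \<longleftrightarrow> x = 0" for x
    using inj_matrix_vector_mult[OF assms(1)] by (metis injD matrix_vector_mult_0_right)
  then show ?thesis unfolding wedge_zero_iff_dependent combination by simp
qed

lemma invertible_matrix_inv:
  fixes A :: "real^'n^'n"
  assumes "invertible A"
  shows "A ** matrix_inv A = mat 1" "matrix_inv A ** A = mat 1"
  using someI_ex[OF assms[unfolded invertible_def]] by (simp_all add: matrix_inv_def)

lemma matrix_inv_unique:
  fixes A B :: "real^'n^'n"
  assumes "A ** B = mat 1"
  shows "matrix_inv A = B"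
proof -
  have "invertible A" using assms invertible_right_inverse by blast
  then have "matrix_inv A = matrix_inv A ** (A ** B)" by (simp add: assms)
  also have "\<dots> = B" using invertible_matrix_inv(2)[OF \<open>invertible A\<close>] by (simp add: matrix_mul_assoc)
  finally show ?thesis .
qed

lemma matrix_inv_congruence:
  fixes A P J :: "real^'n^'n"
  assumes "P ** J = mat 1" and "invertible A"
  shows "matrix_inv (transpose P ** A ** P) = J ** matrix_inv A ** transpose J"
proof (rule matrix_inv_unique)
  have "transpose P ** transpose J = mat 1"
    using assms(1) matrix_left_right_inverse by (metis matrix_transpose_mul transpose_mat)
  have "transpose P ** A ** P ** (J ** matrix_inv A ** transpose J)
      = transpose P ** A ** (P ** J) ** matrix_inv A ** transpose J"
    by (simp add: matrix_mul_assoc)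
  also have "\<dots> = transpose P ** (A ** matrix_inv A) ** transpose J"
    by (simp add: assms(1) matrix_mul_assoc)
  also have "\<dots> = mat 1"
    by (simp add: invertible_matrix_inv(1)[OF assms(2)] \<open>transpose P ** transpose J = mat 1\<close>)
  finally show "transpose P ** A ** P ** (J ** matrix_inv A ** transpose J) = mat 1" .
qed

lemma inner_congruence_inverse:
  fixes P J B :: "real^'n^'n"
  assumes "P ** J = mat 1"
  shows "((J ** B ** transpose J) *v (transpose P *v x)) \<bullet> (transpose P *v y) = (B *v x) \<bullet> y"
proof -
  have JP: "transpose J ** transpose P = mat 1"
    using assms by (metis matrix_transpose_mul transpose_mat)
  have "(J ** B ** transpose J) *v (transpose P *v x) = (J ** B ** (transpose J ** transpose P)) *v x"
    by (simp only: matrix_vector_mul_assoc matrix_mul_assoc)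
  also have "\<dots> = J *v (B *v x)"
    by (simp only: JP matrix_mul_rid matrix_vector_mul_assoc)
  also have "\<dots> = (B *v x) v* transpose J"
    by simp
  finally have "(J ** B ** transpose J) *v (transpose P *v x) = (B *v x) v* transpose J" .
  moreover have "transpose J *v (transpose P *v y) = y"
    by (simp only: matrix_vector_mul_assoc JP matrix_vector_mul_lid)
  ultimately show ?thesis by (simp only: dot_lmul_matrix)
qed

lemma det_left_inverse:
  fixes P J :: "real^'n^'n"
  assumes "P ** J = mat 1"
  shows "det J * det P = 1"
  using assms by (metis det_I det_mul mult.commute)

text \<open>In the transfer lemmas \<open>J\<close> and \<open>P\<close> stand for the Jacobians of the chart and of its
  inverse at the equilibrium.\<close>

lemma E_set_transfer:
  fixes P J :: "real^'n^'n"
  assumes "P ** J = mat 1" and "x \<in> E_set \<Omega> \<nu> C" and "y \<in> V"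
    and "\<nu>' y = \<nu> x * det J"
    and grads: "\<And>i. i \<in> {1..CARD('n) - 1} \<Longrightarrow> grad (C' i) y = transpose P *v grad (C i) x"
  shows "y \<in> E_set V \<nu>' C'"
proof -
  have "invertible (transpose P)"
    using assms(1) invertible_right_inverse transpose_invertible by blast
  then have wedge: "wedge_zero k (\<lambda>i. grad (C' i) y) \<longleftrightarrow> wedge_zero k (\<lambda>i. grad (C i) x)"
    if "k \<le> CARD('n) - 1" for k
    by (rule wedge_zero_matrix_vector_mult) (use that in \<open>intro grads, auto\<close>)
  have "det J \<noteq> 0" using det_left_inverse[OF assms(1)] by auto
  then show ?thesis
    using assms(2-4) wedge[of "CARD('n) - 2"] wedge[of "CARD('n) - 1"] by (simp add: E_set_def)
qed

lemma lagrange_cond_transfer: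
  fixes P :: "real^'n^'n"
  assumes "lagrange_cond C lam x" and "CARD('n) \<ge> 2"
    and "\<And>i. i \<in> {1..CARD('n) - 1} \<Longrightarrow> grad (C' i) y = transpose P *v grad (C i) x"
  shows "lagrange_cond C' lam y"
proof -
  let ?n = "CARD('n)"
  have "grad (C' (?n - 1)) y + (\<Sum>i=1..?n - 2. lam i *\<^sub>R grad (C' i) y)
      = transpose P *v grad (C (?n - 1)) x + (\<Sum>i=1..?n - 2. lam i *\<^sub>R (transpose P *v grad (C i) x))"
    using assms(2,3) by (intro arg_cong2[where f = "(+)"] sum.cong) auto
  also have "\<dots> = transpose P *v (grad (C (?n - 1)) x + (\<Sum>i=1..?n - 2. lam i *\<^sub>R grad (C i) x))"
    by (simp only: matrix_vector_right_distrib linear_sum[OF matrix_vector_mul_linear]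
        linear_scale[OF matrix_vector_mul_linear])
  also have "\<dots> = 0" using assms(1) by (simp add: lagrange_cond_def)
  finally show ?thesis by (simp add: lagrange_cond_def)
qed

lemma nondegenerate_transfer:
  fixes P J :: "real^'n^'n"
  assumes "P ** J = mat 1" and "nondegenerate C lam x"
    and "Hess (F_lam C' lam) y = transpose P ** Hess (F_lam C lam) x ** P"
  shows "nondegenerate C' lam y"
proof -
  have "invertible P" using assms(1) invertible_right_inverse by blast
  with assms(2,3) show ?thesis
    by (simp add: nondegenerate_def invertible_mult transpose_invertible)
qed

lemma index_I_transfer:
  fixes P J :: "real^'n^'n"
  assumes PJ: "P ** J = mat 1" and "nondegenerate C lam x"
    and "\<nu>' y = \<nu> x * det J"
    and "Hess (F_lam C' lam) y = transpose P ** Hess (F_lam C lam) x ** P"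
    and grads: "\<And>i. i \<in> {1..CARD('n) - 2} \<Longrightarrow> grad (C' i) y = transpose P *v grad (C i) x"
  shows "index_I \<nu>' C' lam y = index_I \<nu> C lam x"
proof -
  define A where "A = Hess (F_lam C lam) x"
  have "invertible A" using assms(2) by (simp add: A_def nondegenerate_def)
  have gram: "wedge_ip (CARD('n) - 2)
        (\<lambda>i. (J ** matrix_inv A ** transpose J) *v grad (C' i) y) (\<lambda>i. grad (C' i) y)
      = wedge_ip (CARD('n) - 2) (\<lambda>i. matrix_inv A *v grad (C i) x) (\<lambda>i. grad (C i) x)"
    unfolding wedge_ip_def
  proof (rule detn_cong)
    fix i j assume "i < CARD('n) - 2" "j < CARD('n) - 2"
    then have "Suc i \<in> {1..CARD('n) - 2}" "Suc j \<in> {1..CARD('n) - 2}" by auto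
    then show "((J ** matrix_inv A ** transpose J) *v grad (C' (Suc i)) y) \<bullet> grad (C' (Suc j)) y
        = (matrix_inv A *v grad (C (Suc i)) x) \<bullet> grad (C (Suc j)) x"
      by (simp only: grads inner_congruence_inverse[OF PJ])
  qed
  have "index_I \<nu>' C' lam y = (\<nu> x)\<^sup>2 * (det J * det P)\<^sup>2 * det A *
      wedge_ip (CARD('n) - 2) (\<lambda>i. matrix_inv A *v grad (C i) x) (\<lambda>i. grad (C i) x)"
    using assms(3,4) by (simp add: index_I_def A_def[symmetric] matrix_inv_congruence[OF PJ \<open>invertible A\<close>]
        gram det_mul power_mult_distrib power2_eq_square)
  also have "\<dots> = index_I \<nu> C lam x"
    by (simp add: index_I_def Let_def A_def det_left_inverse[OF PJ])
  finally show ?thesis .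
qed

definition jacobian :: "(real^'m \<Rightarrow> real^'n) \<Rightarrow> real^'m \<Rightarrow> real^'m^'n" where
  "jacobian f x = matrix (frechet_derivative f (at x))"

lemma has_derivative_jacobian:
  assumes "f differentiable (at x)"
  shows "(f has_derivative (\<lambda>h. jacobian f x *v h)) (at x)"
proof -
  have D: "(f has_derivative frechet_derivative f (at x)) (at x)"
    using assms frechet_derivative_works by blast
  then have "(\<lambda>h. jacobian f x *v h) = frechet_derivative f (at x)"
    using has_derivative_linear by (auto simp: fun_eq_iff jacobian_def matrix_works)
  then show ?thesis using D by simp
qed

lemma has_derivative_vec_nth:
  fixes f :: "'a::real_normed_vector \<Rightarrow> real^'n"
  assumes "\<And>i. ((\<lambda>x. f x $ i) has_derivative (\<lambda>h. f' h $ i)) (at a)"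
  shows "(f has_derivative f') (at a)"
  unfolding has_derivative_componentwise_within[of f f' a UNIV]
  using assms by (simp add: Basis_vec_def cart_eq_inner_axis[symmetric])

lemma differentiable_vec_lambda:
  fixes f :: "'n::finite \<Rightarrow> 'a::real_normed_vector \<Rightarrow> real"
  assumes "\<And>i. f i differentiable (at a)"
  shows "(\<lambda>x. \<chi> i. f i x) differentiable (at a)"
proof -
  obtain f' where "\<And>i. (f i has_derivative f' i) (at a)"
    using assms unfolding differentiable_def by metis
  then have "((\<lambda>x. \<chi> i. f i x) has_derivative (\<lambda>h. \<chi> i. f' i h)) (at a)"
    by (intro has_derivative_vec_nth) simp
  then show ?thesis unfolding differentiable_def by blast
qed

lemma smooth_on_witness_has_derivative:
  assumes "\<forall>x\<in>S. D [] x = f x" and "\<forall>vs. \<forall>x\<in>S. (D vs has_derivative (\<lambda>v. D (v # vs) x)) (at x)"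
    and "open S" and "x \<in> S"
  shows "(f has_derivative (\<lambda>v. D [v] x)) (at x)"
proof (rule has_derivative_transform_within_open[OF _ assms(3,4)])
  show "(D [] has_derivative (\<lambda>v. D [v] x)) (at x)" using assms(2,4) by blast
  show "D [] z = f z" if "z \<in> S" for z using assms(1) that by blast
qed

lemma smooth_on_differentiable:
  assumes "smooth_on S f" and "open S" and "x \<in> S"
  shows "f differentiable (at x)"
proof -
  obtain D where "\<forall>x\<in>S. D [] x = f x" "\<forall>vs. \<forall>x\<in>S. (D vs has_derivative (\<lambda>v. D (v # vs) x)) (at x)"
    using assms(1) unfolding smooth_on_def by blast
  from smooth_on_witness_has_derivative[OF this assms(2,3)] show ?thesis
    unfolding differentiable_def by blast
qed

lemma smooth_on_frechet_derivative:
  assumes "smooth_on S f" and "open S"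
  shows "smooth_on S (\<lambda>x. frechet_derivative f (at x) v)"
proof -
  obtain D where D: "\<forall>x\<in>S. D [] x = f x" "\<forall>vs. \<forall>x\<in>S. (D vs has_derivative (\<lambda>v. D (v # vs) x)) (at x)"
    using assms(1) unfolding smooth_on_def by blast
  have "frechet_derivative f (at x) v = D [v] x" if "x \<in> S" for x
    using frechet_derivative_at[OF smooth_on_witness_has_derivative[OF D assms(2) that], symmetric] by simp
  with D(2) show ?thesis
    unfolding smooth_on_def by (intro exI[of _ "\<lambda>vs. D (vs @ [v])"]) simp
qed

lemma smooth_on_const: "smooth_on S (\<lambda>x. c)"
  unfolding smooth_on_def
  by (intro exI[of _ "\<lambda>vs x. if vs = [] then c else 0"]) auto

lemma smooth_on_add:
  assumes "smooth_on S f" and "smooth_on S g"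
  shows "smooth_on S (\<lambda>x. f x + g x)"
proof -
  obtain Df Dg where "\<forall>x\<in>S. Df [] x = f x" "\<forall>vs. \<forall>x\<in>S. (Df vs has_derivative (\<lambda>v. Df (v # vs) x)) (at x)"
    and "\<forall>x\<in>S. Dg [] x = g x" "\<forall>vs. \<forall>x\<in>S. (Dg vs has_derivative (\<lambda>v. Dg (v # vs) x)) (at x)"
    using assms unfolding smooth_on_def by blast
  then show ?thesis
    unfolding smooth_on_def by (intro exI[of _ "\<lambda>vs x. Df vs x + Dg vs x"]) (simp add: has_derivative_add)
qed

lemma smooth_on_cmult:
  fixes f :: "'a::real_normed_vector \<Rightarrow> real"
  assumes "smooth_on S f"
  shows "smooth_on S (\<lambda>x. c * f x)"
proof -
  obtain D where "\<forall>x\<in>S. D [] x = f x" "\<forall>vs. \<forall>x\<in>S. (D vs has_derivative (\<lambda>v. D (v # vs) x)) (at x)"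
    using assms unfolding smooth_on_def by blast
  then show ?thesis
    unfolding smooth_on_def by (intro exI[of _ "\<lambda>vs x. c * D vs x"]) (simp add: has_derivative_mult_right)
qed

lemma smooth_on_sum:
  assumes "finite I" and "\<And>i. i \<in> I \<Longrightarrow> smooth_on S (f i)"
  shows "smooth_on S (\<lambda>x. \<Sum>i\<in>I. f i x)"
  using assms by (induction I rule: finite_induct) (simp_all add: smooth_on_const smooth_on_add)

lemma smooth_on_F_lam:
  assumes "smooth_on S (C (CARD('n) - 1))" and "\<And>i. i \<in> {1..CARD('n) - 2} \<Longrightarrow> smooth_on S (C i)"
  shows "smooth_on S (F_lam C lam :: real^'n \<Rightarrow> real)"
  unfolding F_lam_def using assms by (intro smooth_on_add smooth_on_sum smooth_on_cmult) auto

lemma frechet_derivative_eq_grad_inner: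
  fixes f :: "real^'n \<Rightarrow> real"
  assumes "f differentiable (at x)"
  shows "frechet_derivative f (at x) v = grad f x \<bullet> v"
proof -
  have lin: "linear (frechet_derivative f (at x))"
    using assms frechet_derivative_works has_derivative_linear by blast
  have "v = (\<Sum>i\<in>UNIV. v $ i *\<^sub>R axis i 1)"
    using basis_expansion[of v] by (simp add: scalar_mult_eq_scaleR)
  then have "frechet_derivative f (at x) v = frechet_derivative f (at x) (\<Sum>i\<in>UNIV. v $ i *\<^sub>R axis i 1)"
    by (rule arg_cong)
  also have "\<dots> = (\<Sum>i\<in>UNIV. v $ i * frechet_derivative f (at x) (axis i 1))"
    by (simp add: linear_sum[OF lin] linear_scale[OF lin])
  also have "\<dots> = grad f x \<bullet> v"
    by (simp add: grad_def inner_vec_def mult.commute)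
  finally show ?thesis .
qed

lemma grad_compose_nth:
  fixes f :: "real^'n \<Rightarrow> real" and g :: "real^'m \<Rightarrow> real^'n"
  assumes "g differentiable (at y)" and "f differentiable (at (g y))"
  shows "grad (f \<circ> g) y $ i = grad f (g y) \<bullet> frechet_derivative g (at y) (axis i 1)"
proof -
  have "grad (f \<circ> g) y $ i = frechet_derivative f (at (g y)) (frechet_derivative g (at y) (axis i 1))"
    by (simp add: grad_def frechet_derivative_compose[OF assms])
  then show ?thesis by (simp only: frechet_derivative_eq_grad_inner[OF assms(2)])
qed

lemma grad_compose:
  fixes f :: "real^'n \<Rightarrow> real" and g :: "real^'m \<Rightarrow> real^'n"
  assumes "g differentiable (at y)" and "f differentiable (at (g y))"
  shows "grad (f \<circ> g) y = transpose (jacobian g y) *v grad f (g y)"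
  using grad_compose_nth[OF assms]
  by (simp add: Finite_Cartesian_Product.vec_eq_iff jacobian_def matrix_def inner_vec_def vector_matrix_mult_def mult.commute)

lemma grad_F_lam:
  fixes C :: "nat \<Rightarrow> real^'n \<Rightarrow> real"
  assumes "C (CARD('n) - 1) differentiable (at x)"
    and "\<And>i. i \<in> {1..CARD('n) - 2} \<Longrightarrow> C i differentiable (at x)"
  shows "grad (F_lam C lam) x = grad (C (CARD('n) - 1)) x + (\<Sum>i=1..CARD('n) - 2. lam i *\<^sub>R grad (C i) x)"
proof -
  let ?D = "\<lambda>f. frechet_derivative f (at x)"
  have "(F_lam C lam has_derivative (\<lambda>v. ?D (C (CARD('n) - 1)) v + (\<Sum>i=1..CARD('n) - 2. lam i * ?D (C i) v))) (at x)"
    unfolding F_lam_def using assms frechet_derivative_works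
    by (intro has_derivative_add has_derivative_sum has_derivative_mult_right) auto
  then show ?thesis by (simp add: frechet_derivative_at[symmetric] grad_def Finite_Cartesian_Product.vec_eq_iff)
qed

lemma smooth_on_grad_has_derivative:
  fixes f :: "real^'n \<Rightarrow> real"
  assumes "smooth_on S f" and "open S" and "x \<in> S"
  shows "(grad f has_derivative (\<lambda>h. Hess f x *v h)) (at x)"
proof -
  have "grad f differentiable (at x)"
    unfolding grad_def using assms
    by (intro differentiable_vec_lambda smooth_on_differentiable[OF smooth_on_frechet_derivative])
  then show ?thesis using has_derivative_jacobian by (simp add: Hess_def jacobian_def)
qed

lemma congruence_mult_nth:
  fixes P :: "real^'m^'n" and A :: "real^'n^'n"
  shows "((transpose P ** A ** P) *v h) $ i = (A *v (P *v h)) \<bullet> (P *v axis i 1)"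
proof -
  have "(transpose P ** A ** P) *v h = transpose P *v (A *v (P *v h))"
    by (simp add: matrix_vector_mul_assoc matrix_mul_assoc)
  also have "\<dots> = (A *v (P *v h)) v* P" by simp
  finally have "((transpose P ** A ** P) *v h) $ i = ((A *v (P *v h)) v* P) \<bullet> axis i 1"
    by (simp add: cart_eq_inner_axis)
  then show ?thesis by (simp only: dot_lmul_matrix)
qed

text \<open>At a critical point of \<open>F\<close> the second-order term of the chain rule drops out, so the
  Hessian transforms by congruence.\<close>

lemma Hess_compose_at_critical_point:
  fixes F :: "real^'n \<Rightarrow> real" and \<Psi> :: "real^'m \<Rightarrow> real^'n"
  assumes "open V" and "y \<in> V" and "smooth_on V \<Psi>"
    and F_diff: "\<And>z. z \<in> V \<Longrightarrow> F differentiable (at (\<Psi> z))"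
    and A: "(grad F has_derivative (\<lambda>h. A *v h)) (at (\<Psi> y))"
    and critical: "grad F (\<Psi> y) = 0"
  shows "Hess (F \<circ> \<Psi>) y = transpose (jacobian \<Psi> y) ** A ** jacobian \<Psi> y"
proof -
  define P where "P = jacobian \<Psi> y"
  have \<Psi>_diff: "\<Psi> differentiable (at z)" if "z \<in> V" for z
    using smooth_on_differentiable[OF assms(3,1) that] .
  have \<Psi>': "(\<Psi> has_derivative (\<lambda>h. P *v h)) (at y)"
    unfolding P_def using has_derivative_jacobian[OF \<Psi>_diff[OF assms(2)]] .
  have "(grad (F \<circ> \<Psi>) has_derivative (\<lambda>h. (transpose P ** A ** P) *v h)) (at y)"
  proof (rule has_derivative_vec_nth)
    fix i
    obtain B where B: "((\<lambda>z. frechet_derivative \<Psi> (at z) (axis i 1)) has_derivative B) (at y)"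
      using smooth_on_differentiable[OF smooth_on_frechet_derivative[OF assms(3,1)] assms(1,2)]
      unfolding differentiable_def by blast
    have "((\<lambda>z. grad F (\<Psi> z)) has_derivative (\<lambda>h. A *v (P *v h))) (at y)"
      using diff_chain_at[OF \<Psi>' A] by (simp add: o_def)
    from has_derivative_inner[OF this B]
    have "((\<lambda>z. grad F (\<Psi> z) \<bullet> frechet_derivative \<Psi> (at z) (axis i 1)) has_derivative
        (\<lambda>h. ((transpose P ** A ** P) *v h) $ i)) (at y)"
      by (rule has_derivative_eq_rhs)
        (simp add: fun_eq_iff critical congruence_mult_nth frechet_derivative_at[OF \<Psi>', symmetric])
    then show "((\<lambda>z. grad (F \<circ> \<Psi>) z $ i) has_derivative (\<lambda>h. ((transpose P ** A ** P) *v h) $ i)) (at y)"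
      by (rule has_derivative_transform_within_open[OF _ assms(1,2)])
        (simp add: grad_compose_nth \<Psi>_diff F_diff)
  qed
  then show ?thesis
    unfolding P_def Hess_def by (metis frechet_derivative_at matrix_of_matrix_vector_mul)
qed

lemma jacobian_left_inverse:
  assumes "open U" and "x \<in> U" and "\<And>z. z \<in> U \<Longrightarrow> \<Psi> (\<Phi> z) = z"
    and "\<Phi> differentiable (at x)" and "\<Psi> differentiable (at (\<Phi> x))"
  shows "jacobian \<Psi> (\<Phi> x) ** jacobian \<Phi> x = mat 1"
proof -
  have "((\<Psi> \<circ> \<Phi>) has_derivative (\<lambda>h. (jacobian \<Psi> (\<Phi> x) ** jacobian \<Phi> x) *v h)) (at x)"
    using diff_chain_at[OF has_derivative_jacobian[OF assms(4)] has_derivative_jacobian[OF assms(5)]]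
    by (simp add: o_def matrix_vector_mul_assoc)
  moreover have "((\<Psi> \<circ> \<Phi>) has_derivative (\<lambda>h. h)) (at x)"
    by (rule has_derivative_transform_within_open[OF has_derivative_ident assms(1,2)]) (simp add: assms(3))
  ultimately have "(\<lambda>h. (jacobian \<Psi> (\<Phi> x) ** jacobian \<Phi> x) *v h) = (\<lambda>h. mat 1 *v h)"
    by (simp add: has_derivative_unique)
  then show ?thesis by (metis matrix_of_matrix_vector_mul)
qed

lemma jacobian_inv_into_diffeo:
  assumes "diffeo_on U \<Phi>" and "x \<in> U"
  shows "jacobian (inv_into U \<Phi>) (\<Phi> x) ** jacobian \<Phi> x = mat 1"
  using assms unfolding diffeo_on_def
  by (intro jacobian_left_inverse[of U]) (auto intro: smooth_on_differentiable)

lemma grad_push_fun: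
  assumes "diffeo_on U \<Phi>" and "x \<in> U" and "f differentiable (at x)"
  shows "grad (push_fun U \<Phi> f) (\<Phi> x) = transpose (jacobian (inv_into U \<Phi>) (\<Phi> x)) *v grad f x"
proof -
  have "inv_into U \<Phi> differentiable (at (\<Phi> x))"
    using assms(1,2) unfolding diffeo_on_def by (intro smooth_on_differentiable) auto
  then show ?thesis
    using assms grad_compose unfolding push_fun_def diffeo_on_def by fastforce
qed

lemma Hess_push_fun_at_critical_point:
  assumes "diffeo_on U \<Phi>" and "x \<in> U" and "U \<subseteq> S" and "open S" and "smooth_on S F"
    and "grad F x = 0"
  shows "Hess (push_fun U \<Phi> F) (\<Phi> x)
      = transpose (jacobian (inv_into U \<Phi>) (\<Phi> x)) ** Hess F x ** jacobian (inv_into U \<Phi>) (\<Phi> x)"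
  unfolding push_fun_def
proof (rule Hess_compose_at_critical_point)
  show "open (\<Phi> ` U)" "\<Phi> x \<in> \<Phi> ` U" "smooth_on (\<Phi> ` U) (inv_into U \<Phi>)"
    using assms(1,2) by (auto simp: diffeo_on_def)
  show "F differentiable (at (inv_into U \<Phi> z))" if "z \<in> \<Phi> ` U" for z
    using inv_into_into[OF that] assms(3) by (intro smooth_on_differentiable[OF assms(5,4)]) blast
  have "inv_into U \<Phi> (\<Phi> x) = x" using assms(1,2) by (simp add: diffeo_on_def)
  then show "(grad F has_derivative (\<lambda>h. Hess F x *v h)) (at (inv_into U \<Phi> (\<Phi> x)))"
    "grad F (inv_into U \<Phi> (\<Phi> x)) = 0"
    using smooth_on_grad_has_derivative assms by auto
qed

lemma push_nu_apply:
  assumes "inj_on \<Phi> U" and "x \<in> U"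
  shows "push_nu U \<Phi> \<nu> (\<Phi> x) = \<nu> x * det (jacobian \<Phi> x)"
  using assms by (simp add: push_nu_def jacobian_def)

lemma F_lam_push_fun: "F_lam (\<lambda>i. push_fun U \<Phi> (C i)) lam = push_fun U \<Phi> (F_lam C lam)"
  by (simp add: F_lam_def push_fun_def fun_eq_iff)

theorem theorem4p4:
  fixes \<Omega> \<Omega>' :: "(real^'n) set"
    and \<nu> :: "real^'n \<Rightarrow> real"
    and C :: "nat \<Rightarrow> real^'n \<Rightarrow> real"
    and lam :: "nat \<Rightarrow> real"
    and \<Phi> :: "real^'n \<Rightarrow> real^'n"
    and xe :: "real^'n"
  assumes n2: "CARD('n) \<ge> 2"
    and open_\<Omega>: "open \<Omega>"
    and smooth_\<nu>: "smooth_on \<Omega> \<nu>"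
    and smooth_C: "\<And>i. i \<in> {1..CARD('n) - 1} \<Longrightarrow> smooth_on \<Omega> (C i)"
    and xe_E: "xe \<in> E_set \<Omega> \<nu> C"
    and lam_e: "lagrange_cond C lam xe"
    and nondeg: "nondegenerate C lam xe"
    and open_\<Omega>': "open \<Omega>'" and sub: "\<Omega>' \<subseteq> \<Omega>" and xe_in: "xe \<in> \<Omega>'"
    and diffeo: "diffeo_on \<Omega>' \<Phi>"
  shows "\<Phi> xe \<in> E_set (\<Phi> ` \<Omega>') (push_nu \<Omega>' \<Phi> \<nu>) (\<lambda>i. push_fun \<Omega>' \<Phi> (C i))
       \<and> lagrange_cond (\<lambda>i. push_fun \<Omega>' \<Phi> (C i)) lam (\<Phi> xe)
       \<and> nondegenerate (\<lambda>i. push_fun \<Omega>' \<Phi> (C i)) lam (\<Phi> xe)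
       \<and> index_I (push_nu \<Omega>' \<Phi> \<nu>) (\<lambda>i. push_fun \<Omega>' \<Phi> (C i)) lam (\<Phi> xe)
           = index_I \<nu> C lam xe"
proof -
  let ?C' = "\<lambda>i. push_fun \<Omega>' \<Phi> (C i)"
  define J P where "J = jacobian \<Phi> xe" and "P = jacobian (inv_into \<Omega>' \<Phi>) (\<Phi> xe)"
  have PJ: "P ** J = mat 1"
    unfolding J_def P_def using jacobian_inv_into_diffeo[OF diffeo xe_in] .
  have xe_\<Omega>: "xe \<in> \<Omega>" using sub xe_in by blast
  have grads: "grad (?C' i) (\<Phi> xe) = transpose P *v grad (C i) xe" if "i \<in> {1..CARD('n) - 1}" for i
    unfolding P_def
    using grad_push_fun[OF diffeo xe_in smooth_on_differentiable[OF smooth_C[OF that] open_\<Omega> xe_\<Omega>]] .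
  have nu: "push_nu \<Omega>' \<Phi> \<nu> (\<Phi> xe) = \<nu> xe * det J"
    using diffeo xe_in by (simp add: J_def push_nu_apply diffeo_on_def)
  have C_smooth: "smooth_on \<Omega> (C (CARD('n) - 1))" "\<And>i. i \<in> {1..CARD('n) - 2} \<Longrightarrow> smooth_on \<Omega> (C i)"
    using n2 smooth_C by auto
  have "grad (F_lam C lam) xe = grad (C (CARD('n) - 1)) xe + (\<Sum>i=1..CARD('n) - 2. lam i *\<^sub>R grad (C i) xe)"
    using C_smooth by (intro grad_F_lam smooth_on_differentiable[OF _ open_\<Omega> xe_\<Omega>]) auto
  then have "grad (F_lam C lam) xe = 0" using lam_e by (simp add: lagrange_cond_def)
  moreover have "smooth_on \<Omega> (F_lam C lam)" by (intro smooth_on_F_lam C_smooth)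
  ultimately have Hess: "Hess (F_lam ?C' lam) (\<Phi> xe) = transpose P ** Hess (F_lam C lam) xe ** P"
    unfolding F_lam_push_fun P_def
    using Hess_push_fun_at_critical_point[OF diffeo xe_in sub open_\<Omega>] by blast
  show ?thesis
    by (intro conjI E_set_transfer[OF PJ xe_E] lagrange_cond_transfer[OF lam_e n2 grads]
        nondegenerate_transfer[OF PJ nondeg] index_I_transfer[OF PJ nondeg]
        imageI xe_in nu Hess grads) auto
qed

end
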